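(* Let $G=(V,E)$ be a finite connected graph, $G'=(V',E')$ a connected subgraph, $F\subset E$, $q\ge1$, $p\in(0,1)$, and $\lambda_1,\lambda_2\in\{1,q\}^E$ with $\lambda_1\le\lambda_2$. Then $$\mathbb P^{G'}\preceq\mathbb P^{G,E',\lambda_1},\qquad\mathbb P^{G,E',\lambda_1}\preceq\mathbb P^{G,E',\lambda_2},\qquad\mathbb P^{G,E\setminus F,\lambda_2}\preceq\mathbb P^{G/F}.$$ More generally, for $\lambda\in\{1,q\}^E$: if $E''\subset E'$ then $\mathbb P^{G',E'',\lambda_{E'}}\preceq\mathbb P^{G,E'',\lambda}$, and if $E''\subset E$ with $E''\cap F=\emptyset$ then $\mathbb P^{G,E'',\lambda}\preceq\mathbb P^{G/F,E'',\lambda_{E\setminus F}}$.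
   Context: For a finite connected (multi)graph $H$ with conductances $c$, $\Delta^H_c f(x)=\sum_{e=\{x,y\}}c_e(f(x)-f(y))$ acts on zero-sum functions on $\mathbf V(H)$; $\det\Delta^H_c$ is its determinant. For $\kappa$ and a set $E'$ of edges, $h(\kappa)$ and $s(\kappa)$ count the edges (in the domain of $\kappa$) with $\kappa_e=q$ resp. $\kappa_e=1$. $\mathbb P^{H}=\mathbb P^{H,p}$ is the measure on $\{1,q\}^{\mathbf E(H)}$ with $\mathbb P^H(\kappa)\propto p^{h(\kappa)}(1-p)^{s(\kappa)}(\det\Delta^H_\kappa)^{-1/2}$. For $E''\subset\mathbf E(H)$ and $\lambda\in\{1,q\}^{\mathbf E(H)}$, the measure with boundary condition is $\mathbb P^{H,E'',\lambda}(\kappa)\propto p^{h(\kappa)}(1-p)^{s(\kappa)}(\det\Delta^H_{(\lambda,\kappa)})^{-1/2}$ on $\kappa\in\{1,q\}^{E''}$, where $(\lambda,\kappa)$ equals $\kappa$ on $E''$ and $\lambda$ on $\mathbf E(H)\setminus E''$. $G/F$ is the multigraph obtained from $G$ by identifying the endpoints of each edge of $F$; its edges are identified with $E\setminus F$. $\mu_1\preceq\mu_2$ means $\mu_1(A)\le\mu_2(A)$ for every increasing event $A$ (coordinatewise order, $1<q$). *)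

theory Defs
  imports "HOL-Analysis.Analysis"
begin

text \<open>Multigraphs: a vertex set V, an edge set E and an endpoint map ends
  (an edge e joins fst (ends e) and snd (ends e); orientation is irrelevant).\<close>

definition adj :: "'e set \<Rightarrow> ('e \<Rightarrow> 'v \<times> 'v) \<Rightarrow> 'v \<Rightarrow> 'v \<Rightarrow> bool" where
  "adj E ends x y \<longleftrightarrow> (\<exists>e\<in>E. ends e = (x, y) \<or> ends e = (y, x))"

definition multigraph :: "'v set \<Rightarrow> 'e set \<Rightarrow> ('e \<Rightarrow> 'v \<times> 'v) \<Rightarrow> bool" where
  "multigraph V E ends \<longleftrightarrow> finite V \<and> finite E \<and>
     (\<forall>e\<in>E. fst (ends e) \<in> V \<and> snd (ends e) \<in> V)"

definition connected_mg :: "'v set \<Rightarrow> 'e set \<Rightarrow> ('e \<Rightarrow> 'v \<times> 'v) \<Rightarrow> bool" where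
  "connected_mg V E ends \<longleftrightarrow> multigraph V E ends \<and> V \<noteq> {} \<and>
     (\<forall>x\<in>V. \<forall>y\<in>V. (adj E ends)\<^sup>*\<^sup>* x y)"

definition simple_graph :: "'v set \<Rightarrow> 'e set \<Rightarrow> ('e \<Rightarrow> 'v \<times> 'v) \<Rightarrow> bool" where
  "simple_graph V E ends \<longleftrightarrow> multigraph V E ends \<and>
     (\<forall>e\<in>E. fst (ends e) \<noteq> snd (ends e)) \<and>
     (\<forall>e\<in>E. \<forall>e'\<in>E. (ends e' = ends e \<or> ends e' = prod.swap (ends e)) \<longrightarrow> e = e')"

definition subgraph ::
  "'v set \<Rightarrow> 'e set \<Rightarrow> 'v set \<Rightarrow> 'e set \<Rightarrow> ('e \<Rightarrow> 'v \<times> 'v) \<Rightarrow> bool" where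
  "subgraph V' E' V E ends \<longleftrightarrow> V' \<subseteq> V \<and> E' \<subseteq> E \<and>
     (\<forall>e\<in>E'. fst (ends e) \<in> V' \<and> snd (ends e) \<in> V')"

definition contr_class :: "'v set \<Rightarrow> 'e set \<Rightarrow> ('e \<Rightarrow> 'v \<times> 'v) \<Rightarrow> 'v \<Rightarrow> 'v set" where
  "contr_class V F ends x = {y\<in>V. (adj F ends)\<^sup>*\<^sup>* x y}"

definition contr_V :: "'v set \<Rightarrow> 'e set \<Rightarrow> ('e \<Rightarrow> 'v \<times> 'v) \<Rightarrow> 'v set set" where
  "contr_V V F ends = contr_class V F ends ` V"

definition contr_E :: "'e set \<Rightarrow> 'e set \<Rightarrow> 'e set" where
  "contr_E E F = E - F"

definition contr_ends :: "'v set \<Rightarrow> 'e set \<Rightarrow> ('e \<Rightarrow> 'v \<times> 'v) \<Rightarrow> 'e \<Rightarrow> 'v set \<times> 'v set" where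
  "contr_ends V F ends e =
     (contr_class V F ends (fst (ends e)), contr_class V F ends (snd (ends e)))"

definition laplacian ::
  "'e set \<Rightarrow> ('e \<Rightarrow> 'v \<times> 'v) \<Rightarrow> ('e \<Rightarrow> real) \<Rightarrow> ('v \<Rightarrow> real) \<Rightarrow> 'v \<Rightarrow> real" where
  "laplacian E ends c f x =
     (\<Sum>e\<in>E. c e * ((if fst (ends e) = x then f x - f (snd (ends e)) else 0)
                   + (if snd (ends e) = x then f x - f (fst (ends e)) else 0)))"

definition det_on :: "'v set \<Rightarrow> ('v \<Rightarrow> 'v \<Rightarrow> real) \<Rightarrow> real" where
  "det_on V M = (\<Sum>p\<in>{p. p permutes V}. of_int (sign p) * (\<Prod>x\<in>V. M x (p x)))"

text \<open>Determinant of the Laplacian acting on the zero-sum functions on V.  The Laplacian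
  maps zero-sum functions to zero-sum functions and kills constants; its restriction to
  the zero-sum subspace is extended by the identity on the complementary line of constants
  (the orthogonal projection (1/|V|) J onto constants is added), which does not change the
  determinant.\<close>
definition det_lap ::
  "'v set \<Rightarrow> 'e set \<Rightarrow> ('e \<Rightarrow> 'v \<times> 'v) \<Rightarrow> ('e \<Rightarrow> real) \<Rightarrow> real" where
  "det_lap V E ends c = det_on V (\<lambda>x y.
      laplacian E ends c (\<lambda>z. if z = y then 1 else 0) x + 1 / real (card V))"

text \<open>Configurations in {1,q}^D are encoded as boolean functions (True = q, False = 1),
  extended by False outside the domain D.\<close>
definition cfgs :: "'e set \<Rightarrow> ('e \<Rightarrow> bool) set" where
  "cfgs D = {\<omega>. \<forall>e. e \<notin> D \<longrightarrow> \<not> \<omega> e}"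

definition cond :: "real \<Rightarrow> bool \<Rightarrow> real" where
  "cond q b = (if b then q else 1)"

definition hcount :: "'e set \<Rightarrow> ('e \<Rightarrow> bool) \<Rightarrow> nat" where
  "hcount D \<omega> = card {e\<in>D. \<omega> e}"

definition scount :: "'e set \<Rightarrow> ('e \<Rightarrow> bool) \<Rightarrow> nat" where
  "scount D \<omega> = card {e\<in>D. \<not> \<omega> e}"

definition glue :: "'e set \<Rightarrow> ('e \<Rightarrow> bool) \<Rightarrow> ('e \<Rightarrow> bool) \<Rightarrow> 'e \<Rightarrow> bool" where
  "glue D bc \<kappa> e = (if e \<in> D then \<kappa> e else bc e)"

definition weight ::
  "real \<Rightarrow> real \<Rightarrow> 'v set \<Rightarrow> 'e set \<Rightarrow> ('e \<Rightarrow> 'v \<times> 'v) \<Rightarrow> 'e set \<Rightarrow> ('e \<Rightarrow> bool)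
   \<Rightarrow> ('e \<Rightarrow> bool) \<Rightarrow> real" where
  "weight p q V E ends D bc \<kappa> =
     p ^ hcount D \<kappa> * (1 - p) ^ scount D \<kappa> *
     (det_lap V E ends (\<lambda>e. cond q (glue D bc \<kappa> e))) powr (-1/2)"

text \<open>The measure P^{H,D,\<lambda>} on {1,q}^D, given as a function on events A \<subseteq> cfgs D.\<close>
definition Pbc ::
  "real \<Rightarrow> real \<Rightarrow> 'v set \<Rightarrow> 'e set \<Rightarrow> ('e \<Rightarrow> 'v \<times> 'v) \<Rightarrow> 'e set \<Rightarrow> ('e \<Rightarrow> bool)
   \<Rightarrow> ('e \<Rightarrow> bool) set \<Rightarrow> real" where
  "Pbc p q V E ends D bc A =
     (\<Sum>\<kappa>\<in>A \<inter> cfgs D. weight p q V E ends D bc \<kappa>) /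
     (\<Sum>\<kappa>\<in>cfgs D. weight p q V E ends D bc \<kappa>)"

text \<open>P^H = P^{H,E(H),\<lambda>} (the boundary condition is irrelevant).\<close>
definition Pfree ::
  "real \<Rightarrow> real \<Rightarrow> 'v set \<Rightarrow> 'e set \<Rightarrow> ('e \<Rightarrow> 'v \<times> 'v) \<Rightarrow> ('e \<Rightarrow> bool) set \<Rightarrow> real" where
  "Pfree p q V E ends = Pbc p q V E ends E (\<lambda>_. False)"

definition increasing_event :: "'e set \<Rightarrow> ('e \<Rightarrow> bool) set \<Rightarrow> bool" where
  "increasing_event D A \<longleftrightarrow> A \<subseteq> cfgs D \<and>
     (\<forall>\<omega>\<in>A. \<forall>\<omega>'\<in>cfgs D. (\<forall>e. \<omega> e \<longrightarrow> \<omega>' e) \<longrightarrow> \<omega>' \<in> A)"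

definition dominated :: "'e set \<Rightarrow> (('e \<Rightarrow> bool) set \<Rightarrow> real) \<Rightarrow> (('e \<Rightarrow> bool) set \<Rightarrow> real) \<Rightarrow> bool" where
  "dominated D \<mu>1 \<mu>2 \<longleftrightarrow> (\<forall>A. increasing_event D A \<longrightarrow> \<mu>1 A \<le> \<mu>2 A)"

end

theory Submission
  imports Defs
begin

text \<open>Changing the conductance of one edge \<open>e\<close> from \<open>1\<close> to \<open>q\<close> is a rank-one update of the
  Laplacian, so by the matrix determinant lemma it multiplies \<open>det \<Delta>\<close> by \<open>1 + (q - 1) R\<^sub>e\<close>,
  where \<open>R\<^sub>e\<close> is the effective resistance of \<open>e\<close> in the current network.  Hence, given the
  other edges, the odds of \<open>\<kappa>\<^sub>e = q\<close> are \<open>p / (1 - p) \<cdot> (1 + (q - 1) R\<^sub>e)\<^sup>-\<^sup>1\<^sup>/\<^sup>2\<close>, a decreasing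
  function of \<open>R\<^sub>e\<close>.  By Dirichlet's principle \<open>R\<^sub>e = sup\<^sub>f (2 (f x - f y) - energy f)\<close>, where
  \<open>x\<close> and \<open>y\<close> are the endpoints of \<open>e\<close>, so \<open>R\<^sub>e\<close> decreases when conductances increase, when
  edges are added and when edges are contracted (Rayleigh monotonicity).  In each of the
  comparisons the single-site odds are therefore ordered, and Holley's inequality, proved from
  the four functions theorem of Ahlswede and Daykin, turns this into stochastic domination.\<close>

section \<open>Determinants of matrices indexed by a finite set\<close>

lemma det_on_cong:
  assumes "\<And>x y. x \<in> V \<Longrightarrow> y \<in> V \<Longrightarrow> M x y = N x y"
  shows "det_on V M = det_on V N"
  unfolding det_on_def
  by (intro sum.cong refl arg_cong2[where f="(*)"] prod.cong) (auto simp: assms permutes_in_image)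

lemma det_on_empty [simp]: "det_on {} M = 1"
  unfolding det_on_def by simp

lemma det_on_row_expand:
  assumes "finite V" "a \<in> V"
  shows "det_on V (\<lambda>x y. if x = a then r y else M x y) =
    (\<Sum>p | p permutes V. of_int (sign p) * r (p a) * (\<Prod>x\<in>V-{a}. M x (p x)))"
  unfolding det_on_def
  by (intro sum.cong refl) (simp add: prod.delta_remove[OF assms(1)] assms(2) mult.assoc)

lemma det_on_row_sum:
  assumes "finite V" "a \<in> V" "finite Z"
  shows "det_on V (\<lambda>x y. if x = a then (\<Sum>z\<in>Z. c z * R z y) else M x y) =
    (\<Sum>z\<in>Z. c z * det_on V (\<lambda>x y. if x = a then R z y else M x y))"
  unfolding det_on_row_expand[OF assms(1,2)]
  by (simp add: sum_distrib_left sum_distrib_right mult_ac sum.swap[where B = Z])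

lemma det_on_row_add:
  assumes "finite V" "a \<in> V"
  shows "det_on V (\<lambda>x y. if x = a then r1 y + k * r2 y else M x y) =
    det_on V (\<lambda>x y. if x = a then r1 y else M x y) + k * det_on V (\<lambda>x y. if x = a then r2 y else M x y)"
  unfolding det_on_row_expand[OF assms]
  by (simp add: sum_distrib_left algebra_simps sum.distrib)

lemma det_on_equal_rows:
  assumes V: "finite V" and ab: "a \<in> V" "b \<in> V" "a \<noteq> b" and rows: "\<And>y. y \<in> V \<Longrightarrow> M a y = M b y"
  shows "det_on V M = 0"
proof -
  define \<tau> where "\<tau> = Transposition.transpose a b"
  have \<tau>: "\<tau> permutes V" "\<tau> \<circ> \<tau> = id" "sign \<tau> = -1"
    unfolding \<tau>_def using ab by (simp_all add: permutes_swap_id sign_swap_id)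
  let ?g = "\<lambda>p. of_int (sign p) * (\<Prod>x\<in>V. M x (p x))"
  have swap_term: "?g (p \<circ> \<tau>) = - ?g p" if p: "p permutes V" for p
  proof -
    have "sign (p \<circ> \<tau>) = - sign p"
      using sign_compose[OF permutes_imp_permutation[OF V p] permutes_imp_permutation[OF V \<tau>(1)]] \<tau>(3)
      by simp
    moreover have "(\<Prod>x\<in>V. M x (p (\<tau> x))) = (\<Prod>x\<in>V. M (\<tau> x) (p x))"
      using prod.reindex_bij_betw[OF permutes_imp_bij[OF \<tau>(1)], of "\<lambda>z. M (\<tau> z) (p z)"] \<tau>(2)
      by (simp add: pointfree_idE)
    moreover have "M (\<tau> x) (p x) = M x (p x)" if "x \<in> V" for x
      using rows[OF permutes_in_image[OF p, THEN iffD2, OF that]]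
      unfolding \<tau>_def by (auto simp: Transposition.transpose_def)
    ultimately show ?thesis by simp
  qed
  have "det_on V M = (\<Sum>p | p permutes V. ?g (p \<circ> \<tau>))"
    unfolding det_on_def
    by (rule sum.reindex_bij_witness[where i="\<lambda>p. p \<circ> \<tau>" and j="\<lambda>p. p \<circ> \<tau>"])
       (use \<tau> in \<open>auto simp: comp_assoc intro: permutes_compose\<close>)
  also have "\<dots> = (\<Sum>p | p permutes V. - ?g p)"
    by (intro sum.cong refl) (rule swap_term, simp)
  also have "\<dots> = - det_on V M"
    unfolding det_on_def by (simp add: sum_negf)
  finally show ?thesis by simp
qed

lemma det_on_copy_row:
  assumes "finite V" "a \<in> V" "z \<in> V"
  shows "det_on V (\<lambda>x y. if x = a then M z y else M x y) = (if z = a then det_on V M else 0)"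
proof (cases "z = a")
  case True
  then show ?thesis by (auto intro: det_on_cong)
next
  case False
  then show ?thesis using assms by (auto intro: det_on_equal_rows[of V a z])
qed

definition cofactor :: "'v set \<Rightarrow> ('v \<Rightarrow> 'v \<Rightarrow> real) \<Rightarrow> 'v \<Rightarrow> 'v \<Rightarrow> real" where
  "cofactor V M y x = det_on V (\<lambda>w z. if w = y then (if z = x then 1 else 0) else M w z)"

lemma sum_mult_cofactor:
  assumes V: "finite V" and w: "w \<in> V" and y: "y \<in> V"
  shows "(\<Sum>x\<in>V. M w x * cofactor V M y x) = (if w = y then det_on V M else 0)"
proof -
  have row: "(\<Sum>x\<in>V. M w x * (if z = x then 1 else 0)) = M w z" if "z \<in> V" for z
    using V that by (simp add: if_distrib cong: if_cong)
  have "(\<Sum>x\<in>V. M w x * cofactor V M y x) =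
      det_on V (\<lambda>w' z. if w' = y then (\<Sum>x\<in>V. M w x * (if z = x then 1 else 0)) else M w' z)"
    unfolding cofactor_def by (rule det_on_row_sum[symmetric]) (use V y in auto)
  also have "\<dots> = det_on V (\<lambda>w' z. if w' = y then M w z else M w' z)"
    by (rule det_on_cong) (simp add: row)
  also have "\<dots> = (if w = y then det_on V M else 0)"
    by (rule det_on_copy_row[OF V y w])
  finally show ?thesis .
qed

lemma det_on_solvable:
  assumes V: "finite V" and d: "det_on V M \<noteq> 0"
  shows "\<exists>u. \<forall>w\<in>V. (\<Sum>x\<in>V. M w x * u x) = b w"
proof -
  define u where "u x = (\<Sum>y\<in>V. cofactor V M y x * b y) / det_on V M" for x
  have "(\<Sum>x\<in>V. M w x * u x) = b w" if w: "w \<in> V" for w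
  proof -
    have "(\<Sum>x\<in>V. M w x * u x) = (\<Sum>x\<in>V. \<Sum>y\<in>V. b y * (M w x * cofactor V M y x)) / det_on V M"
      unfolding u_def by (simp add: sum_divide_distrib sum_distrib_left mult_ac)
    also have "\<dots> = (\<Sum>y\<in>V. b y * (\<Sum>x\<in>V. M w x * cofactor V M y x)) / det_on V M"
      by (subst sum.swap) (simp add: sum_distrib_left)
    also have "\<dots> = (\<Sum>y\<in>V. if w = y then b y * det_on V M else 0) / det_on V M"
      by (simp add: sum_mult_cofactor[OF V w] if_distrib cong: if_cong)
    also have "\<dots> = b w"
      using V w d by simp
    finally show ?thesis .
  qed
  then show ?thesis by blast
qed

text \<open>Cramer's rule, in the row form available for symmetric matrices.\<close>

lemma det_on_replace_row_solution:
  assumes V: "finite V" and a: "a \<in> V" and sym: "\<And>x y. x \<in> V \<Longrightarrow> y \<in> V \<Longrightarrow> M x y = M y x"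
    and sol: "\<And>w. w \<in> V \<Longrightarrow> (\<Sum>x\<in>V. M w x * u x) = b w"
  shows "det_on V (\<lambda>x y. if x = a then b y else M x y) = u a * det_on V M"
proof -
  have b: "b y = (\<Sum>z\<in>V. u z * M z y)" if "y \<in> V" for y
    using sol[OF that] sym[OF that] by (auto simp: mult.commute intro!: sum.cong)
  have "det_on V (\<lambda>x y. if x = a then b y else M x y) =
        det_on V (\<lambda>x y. if x = a then (\<Sum>z\<in>V. u z * M z y) else M x y)"
    by (rule det_on_cong) (simp add: b)
  also have "\<dots> = (\<Sum>z\<in>V. u z * det_on V (\<lambda>x y. if x = a then M z y else M x y))"
    by (rule det_on_row_sum[OF V a V])
  also have "\<dots> = (\<Sum>z\<in>V. if z = a then u a * det_on V M else 0)"
    by (intro sum.cong refl) (simp add: det_on_copy_row[OF V a])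
  also have "\<dots> = u a * det_on V M"
    using a V by simp
  finally show ?thesis .
qed

definition dipole :: "'v \<Rightarrow> 'v \<Rightarrow> 'v \<Rightarrow> real" where
  "dipole a b x = (if x = a then 1 else 0) - (if x = b then 1 else 0)"

lemma sum_dipole_mult:
  assumes "finite V" "a \<in> V" "b \<in> V"
  shows "(\<Sum>y\<in>V. dipole a b y * w y) = w a - w b"
proof -
  have "dipole a b y * w y = (if y = a then w y else 0) - (if y = b then w y else 0)" for y
    by (simp add: dipole_def)
  then show ?thesis
    using assms by (simp add: sum_subtractf)
qed

lemma det_on_rank_one_update:
  assumes V: "finite V" and a: "a \<in> V" and b: "b \<in> V"
    and sym: "\<And>x y. x \<in> V \<Longrightarrow> y \<in> V \<Longrightarrow> M x y = M y x"
    and sol: "\<And>w. w \<in> V \<Longrightarrow> (\<Sum>x\<in>V. M w x * u x) = dipole a b w"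
  shows "det_on V (\<lambda>x y. M x y + t * dipole a b x * dipole a b y) = det_on V M * (1 + t * (u a - u b))"
proof (cases "a = b")
  case True
  then show ?thesis by (simp add: dipole_def)
next
  case ab: False
  define \<beta> where "\<beta> = dipole a b"
  have \<beta>: "\<beta> a = 1" "\<beta> b = -1" "\<And>x. x \<noteq> a \<Longrightarrow> x \<noteq> b \<Longrightarrow> \<beta> x = 0"
    using ab by (auto simp: \<beta>_def dipole_def)
  define N1 where "N1 = (\<lambda>x y. if x = b then M b y + (-t) * \<beta> y else M x y)"
  define N2 where "N2 = (\<lambda>x y. if x = a then \<beta> y else M x y)"
  have cramer: "det_on V (\<lambda>x y. if x = c then \<beta> y else M x y) = u c * det_on V M" if "c \<in> V" for c
    unfolding \<beta>_def by (rule det_on_replace_row_solution[OF V that sym sol])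
  have "(\<lambda>x y. M x y + t * \<beta> x * \<beta> y) = (\<lambda>x y. if x = a then M a y + t * \<beta> y else N1 x y)"
    using ab \<beta> by (auto simp: N1_def fun_eq_iff)
  then have "det_on V (\<lambda>x y. M x y + t * \<beta> x * \<beta> y) =
     det_on V (\<lambda>x y. if x = a then M a y else N1 x y) + t * det_on V (\<lambda>x y. if x = a then \<beta> y else N1 x y)"
    using det_on_row_add[OF V a] by simp
  also have "det_on V (\<lambda>x y. if x = a then M a y else N1 x y) = det_on V N1"
    by (rule det_on_cong) (use ab in \<open>auto simp: N1_def\<close>)
  also have "det_on V N1 = det_on V (\<lambda>x y. if x = b then M b y else M x y)
      + (-t) * det_on V (\<lambda>x y. if x = b then \<beta> y else M x y)"
    unfolding N1_def by (rule det_on_row_add[OF V b])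
  also have "det_on V (\<lambda>x y. if x = b then M b y else M x y) = det_on V M"
    by (rule det_on_cong) simp
  also have "(\<lambda>x y. if x = a then \<beta> y else N1 x y) = (\<lambda>x y. if x = b then M b y + (-t) * \<beta> y else N2 x y)"
    using ab by (auto simp: N1_def N2_def fun_eq_iff)
  also have "det_on V \<dots> = det_on V (\<lambda>x y. if x = b then M b y else N2 x y)
      + (-t) * det_on V (\<lambda>x y. if x = b then \<beta> y else N2 x y)"
    by (rule det_on_row_add[OF V b])
  also have "det_on V (\<lambda>x y. if x = b then M b y else N2 x y) = det_on V N2"
    by (rule det_on_cong) (use ab in \<open>simp add: N2_def\<close>)
  also have "det_on V (\<lambda>x y. if x = b then \<beta> y else N2 x y) = 0"
    by (rule det_on_equal_rows[of V a b]) (use V a b ab in \<open>auto simp: N2_def\<close>)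
  also have "det_on V N2 = u a * det_on V M"
    unfolding N2_def by (rule cramer[OF a])
  also have "det_on V (\<lambda>x y. if x = b then \<beta> y else M x y) = u b * det_on V M"
    by (rule cramer[OF b])
  finally show ?thesis
    unfolding \<beta>_def by (simp add: algebra_simps)
qed

lemma det_on_subtract_row_multiples:
  assumes V: "finite V" and a: "a \<in> V" and S: "finite S" "S \<subseteq> V" "a \<notin> S"
  shows "det_on V (\<lambda>x y. if x \<in> S then M x y - k x * M a y else M x y) = det_on V M"
  using S
proof (induction S rule: finite_induct)
  case empty
  then show ?case by simp
next
  case (insert s S)
  define P where "P = (\<lambda>x y. if x \<in> S then M x y - k x * M a y else M x y)"
  have s: "s \<in> V" "s \<noteq> a" "s \<notin> S" using insert by auto
  have "(\<lambda>x y. if x \<in> insert s S then M x y - k x * M a y else M x y) =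
        (\<lambda>x y. if x = s then P s y + (- k s) * P a y else P x y)"
    using insert by (auto simp: P_def fun_eq_iff)
  then have "det_on V (\<lambda>x y. if x \<in> insert s S then M x y - k x * M a y else M x y) =
     det_on V (\<lambda>x y. if x = s then P s y else P x y) + (- k s) * det_on V (\<lambda>x y. if x = s then P a y else P x y)"
    using det_on_row_add[OF V s(1)] by simp
  also have "\<dots> = det_on V P"
    using det_on_copy_row[OF V s(1) a] s(2) by (simp add: det_on_copy_row[OF V s(1) s(1)])
  also have "det_on V P = det_on V M"
    unfolding P_def using insert by simp
  finally show ?case .
qed

lemma det_on_insert_zero_column:
  assumes V0: "finite V0" and a: "a \<notin> V0" and zero: "\<And>x. x \<in> V0 \<Longrightarrow> N x a = 0"
  shows "det_on (insert a V0) N = N a a * det_on V0 N"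
proof -
  let ?g = "\<lambda>p. of_int (sign p) * (\<Prod>x\<in>insert a V0. N x (p x))"
  have vanish: "?g p = 0" if "p permutes insert a V0" "\<not> p permutes V0" for p
  proof -
    have "p a \<noteq> a"
      using permutes_superset[OF that(1), of V0] that(2) by auto
    define x where "x = inv p a"
    have px: "p x = a" and "x \<in> insert a V0"
      unfolding x_def using permutes_inverses(1)[OF that(1)] permutes_in_image[OF permutes_inv[OF that(1)]]
      by auto
    with \<open>p a \<noteq> a\<close> have "x \<in> V0" by auto
    then have "(\<Prod>x\<in>insert a V0. N x (p x)) = 0"
      using V0 px zero by (intro prod_zero) auto
    then show ?thesis by simp
  qed
  have "det_on (insert a V0) N = (\<Sum>p | p permutes V0. ?g p)"
    unfolding det_on_def using V0 vanish
    by (intro sum.mono_neutral_right) (auto intro: finite_permutations permutes_subset)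
  also have "\<dots> = (\<Sum>p | p permutes V0. N a a * (of_int (sign p) * (\<Prod>x\<in>V0. N x (p x))))"
    using V0 a by (intro sum.cong refl) (simp add: permutes_not_in)
  also have "\<dots> = N a a * det_on V0 N"
    unfolding det_on_def by (simp add: sum_distrib_left)
  finally show ?thesis .
qed

definition schur_complement :: "('v \<Rightarrow> 'v \<Rightarrow> real) \<Rightarrow> 'v \<Rightarrow> 'v \<Rightarrow> 'v \<Rightarrow> real" where
  "schur_complement M a x y = M x y - M x a / M a a * M a y"

lemma det_on_insert_schur_complement:
  assumes V0: "finite V0" and a: "a \<notin> V0" and Maa: "M a a \<noteq> 0"
  shows "det_on (insert a V0) M = M a a * det_on V0 (schur_complement M a)"
proof -
  define N where "N = (\<lambda>x y. if x \<in> V0 then M x y - M x a / M a a * M a y else M x y)"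
  have "det_on (insert a V0) M = det_on (insert a V0) N"
    unfolding N_def using V0 a by (subst det_on_subtract_row_multiples) auto
  also have "\<dots> = N a a * det_on V0 N"
    by (rule det_on_insert_zero_column) (use V0 a Maa in \<open>auto simp: N_def\<close>)
  also have "\<dots> = M a a * det_on V0 (schur_complement M a)"
    using a by (auto simp: N_def schur_complement_def intro!: det_on_cong)
  finally show ?thesis .
qed

definition qform :: "'v set \<Rightarrow> ('v \<Rightarrow> 'v \<Rightarrow> real) \<Rightarrow> ('v \<Rightarrow> real) \<Rightarrow> real" where
  "qform V M v = (\<Sum>x\<in>V. \<Sum>y\<in>V. v x * M x y * v y)"

definition pos_def_on :: "'v set \<Rightarrow> ('v \<Rightarrow> 'v \<Rightarrow> real) \<Rightarrow> bool" where
  "pos_def_on V M \<longleftrightarrow>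
     (\<forall>x\<in>V. \<forall>y\<in>V. M x y = M y x) \<and> (\<forall>v. (\<exists>x\<in>V. v x \<noteq> 0) \<longrightarrow> 0 < qform V M v)"

lemma qform_cong: "(\<And>x. x \<in> V \<Longrightarrow> v x = w x) \<Longrightarrow> qform V M v = qform V M w"
  unfolding qform_def by (intro sum.cong refl) auto

lemma pos_def_on_diag:
  assumes "finite V" "pos_def_on V M" "a \<in> V"
  shows "M a a > 0"
proof -
  have "0 < qform V M (\<lambda>x. if x = a then 1 else 0)"
    using assms unfolding pos_def_on_def by force
  also have "qform V M (\<lambda>x. if x = a then 1 else 0) =
      (\<Sum>x\<in>V. if x = a then (\<Sum>y\<in>V. if y = a then M a a else 0) else 0)"
    unfolding qform_def by (intro sum.cong refl) (auto intro!: sum.cong)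
  also have "\<dots> = M a a"
    using assms by simp
  finally show ?thesis .
qed

text \<open>Eliminating the variable \<open>a\<close> by minimising over \<open>v a\<close> turns the quadratic form of \<open>M\<close>
  into that of its Schur complement.\<close>

lemma qform_schur_complement:
  fixes v :: "'v \<Rightarrow> real"
  assumes V0: "finite V0" and a: "a \<notin> V0" and Maa: "M a a \<noteq> 0"
    and sym: "\<And>x. x \<in> V0 \<Longrightarrow> M x a = M a x"
  defines "m \<equiv> \<Sum>y\<in>V0. M a y * v y"
  shows "qform (insert a V0) M (v(a := - m / M a a)) = qform V0 (schur_complement M a) v"
proof -
  define w where "w = v(a := - m / M a a)"
  have wv: "\<And>x. x \<in> V0 \<Longrightarrow> w x = v x" using a by (auto simp: w_def)
  have row: "(\<Sum>y\<in>V0. w a * M a y * w y) = w a * m"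
    unfolding m_def sum_distrib_left by (intro sum.cong refl) (simp add: wv)
  have col: "(\<Sum>x\<in>V0. w x * M x a * w a) = w a * m"
    unfolding m_def sum_distrib_left by (intro sum.cong refl) (simp add: wv sym)
  have "qform (insert a V0) M w = w a * M a a * w a + 2 * (w a * m) + qform V0 M v"
    unfolding qform_def using V0 a
    by (simp add: sum.distrib row col qform_cong[of V0 w v, OF wv, unfolded qform_def])
  also have "\<dots> = qform V0 M v - m * m / M a a"
    using Maa by (simp add: w_def field_simps)
  also have "m * m = (\<Sum>x\<in>V0. \<Sum>y\<in>V0. (v x * M x a) * (M a y * v y))"
    unfolding m_def sum_product by (simp add: sym mult.commute)
  also have "qform V0 M v - \<dots> / M a a = qform V0 (schur_complement M a) v"
    unfolding qform_def schur_complement_def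
    by (simp add: sum_subtractf sum_divide_distrib algebra_simps)
  finally show ?thesis unfolding w_def .
qed

lemma pos_def_on_schur_complement:
  assumes V0: "finite V0" and a: "a \<notin> V0" and pd: "pos_def_on (insert a V0) M"
  shows "pos_def_on V0 (schur_complement M a)"
proof -
  have Maa: "M a a > 0"
    using pos_def_on_diag[OF _ pd] V0 by simp
  have sym: "\<And>x y. x \<in> insert a V0 \<Longrightarrow> y \<in> insert a V0 \<Longrightarrow> M x y = M y x"
    using pd unfolding pos_def_on_def by blast
  have "0 < qform V0 (schur_complement M a) v" if "\<exists>x\<in>V0. v x \<noteq> 0" for v
  proof -
    define w where "w = v(a := - (\<Sum>y\<in>V0. M a y * v y) / M a a)"
    have "\<exists>x\<in>insert a V0. w x \<noteq> 0"
      using that a by (auto simp: w_def)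
    then have "0 < qform (insert a V0) M w"
      using pd unfolding pos_def_on_def by blast
    then show ?thesis
      unfolding w_def by (subst (asm) qform_schur_complement) (use V0 a Maa sym in auto)
  qed
  moreover have "schur_complement M a x y = schur_complement M a y x" if "x \<in> V0" "y \<in> V0" for x y
  proof -
    have "M y x = M x y" "M y a = M a y" "M a x = M x a"
      using sym that by auto
    then show ?thesis
      unfolding schur_complement_def by (simp add: mult.commute)
  qed
  ultimately show ?thesis
    unfolding pos_def_on_def by blast
qed

lemma det_on_pos:
  assumes "finite V" "pos_def_on V M"
  shows "det_on V M > 0"
  using assms
proof (induction V arbitrary: M rule: finite_induct)
  case empty
  then show ?case by simp
next
  case (insert a V0)
  have "M a a > 0"
    using pos_def_on_diag[OF _ insert.prems] insert.hyps by simp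
  moreover have "det_on V0 (schur_complement M a) > 0"
    by (rule insert.IH[OF pos_def_on_schur_complement[OF insert.hyps insert.prems]])
  moreover have "det_on (insert a V0) M = M a a * det_on V0 (schur_complement M a)"
    using insert.hyps \<open>M a a > 0\<close> by (intro det_on_insert_schur_complement) auto
  ultimately show ?case
    by simp
qed

section \<open>Laplacian, energy and effective resistance\<close>

definition grad :: "('e \<Rightarrow> 'v \<times> 'v) \<Rightarrow> ('v \<Rightarrow> real) \<Rightarrow> 'e \<Rightarrow> real" where
  "grad ends f e = f (fst (ends e)) - f (snd (ends e))"

definition dirichlet_form ::
  "'e set \<Rightarrow> ('e \<Rightarrow> 'v \<times> 'v) \<Rightarrow> ('e \<Rightarrow> real) \<Rightarrow> ('v \<Rightarrow> real) \<Rightarrow> ('v \<Rightarrow> real) \<Rightarrow> real" where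
  "dirichlet_form E ends c f g = (\<Sum>e\<in>E. c e * grad ends f e * grad ends g e)"

definition energy :: "'e set \<Rightarrow> ('e \<Rightarrow> 'v \<times> 'v) \<Rightarrow> ('e \<Rightarrow> real) \<Rightarrow> ('v \<Rightarrow> real) \<Rightarrow> real" where
  "energy E ends c f = (\<Sum>e\<in>E. c e * (grad ends f e)\<^sup>2)"

definition lap_matrix :: "'v set \<Rightarrow> 'e set \<Rightarrow> ('e \<Rightarrow> 'v \<times> 'v) \<Rightarrow> ('e \<Rightarrow> real) \<Rightarrow> 'v \<Rightarrow> 'v \<Rightarrow> real" where
  "lap_matrix V E ends c x y = laplacian E ends c (\<lambda>z. if z = y then 1 else 0) x + 1 / real (card V)"

abbreviation edge_dipole :: "('e \<Rightarrow> 'v \<times> 'v) \<Rightarrow> 'e \<Rightarrow> 'v \<Rightarrow> real" where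
  "edge_dipole ends e \<equiv> dipole (fst (ends e)) (snd (ends e))"

lemma dirichlet_form_self: "dirichlet_form E ends c f f = energy E ends c f"
  unfolding dirichlet_form_def energy_def by (simp add: power2_eq_square mult.assoc)

lemma energy_nonneg: "(\<And>e. e \<in> E \<Longrightarrow> c e \<ge> 0) \<Longrightarrow> energy E ends c f \<ge> 0"
  unfolding energy_def by (intro sum_nonneg) auto

lemma energy_diff:
  "energy E ends c (\<lambda>x. f x - g x) = energy E ends c f - 2 * dirichlet_form E ends c f g + energy E ends c g"
proof -
  have "c e * (grad ends (\<lambda>x. f x - g x) e)\<^sup>2 =
      c e * (grad ends f e)\<^sup>2 - 2 * (c e * grad ends f e * grad ends g e) + c e * (grad ends g e)\<^sup>2" for e
    by (simp add: grad_def power2_eq_square algebra_simps)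
  then show ?thesis
    unfolding energy_def dirichlet_form_def by (simp add: sum.distrib sum_subtractf sum_distrib_left)
qed

lemma det_lap_eq_det_on: "det_lap V E ends c = det_on V (lap_matrix V E ends c)"
  unfolding det_lap_def lap_matrix_def ..

lemma lap_matrix_eq:
  "lap_matrix V E ends c x y = (\<Sum>e\<in>E. c e * (edge_dipole ends e x * edge_dipole ends e y)) + 1 / real (card V)"
  unfolding lap_matrix_def laplacian_def by (intro arg_cong2[where f = "(+)"] sum.cong refl) (auto simp: dipole_def)

lemma lap_matrix_sym: "lap_matrix V E ends c x y = lap_matrix V E ends c y x"
  unfolding lap_matrix_eq by (simp add: mult.commute)

lemma lap_matrix_bilinear:
  assumes mg: "multigraph V E ends"
  shows "(\<Sum>x\<in>V. v x * (\<Sum>y\<in>V. lap_matrix V E ends c x y * w y)) =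
     dirichlet_form E ends c v w + (\<Sum>x\<in>V. v x) * (\<Sum>y\<in>V. w y) / real (card V)"
proof -
  have V: "finite V" and E: "finite E" and ends: "\<And>e. e \<in> E \<Longrightarrow> fst (ends e) \<in> V \<and> snd (ends e) \<in> V"
    using mg by (auto simp: multigraph_def)
  have grad_eq: "(\<Sum>x\<in>V. edge_dipole ends e x * f x) = grad ends f e" if "e \<in> E" for e f
    unfolding grad_def using V ends[OF that] by (simp add: sum_dipole_mult)
  let ?F = "\<lambda>e x y. c e * ((edge_dipole ends e x * v x) * (edge_dipole ends e y * w y))"
  have "(\<Sum>x\<in>V. v x * (\<Sum>y\<in>V. lap_matrix V E ends c x y * w y)) =
     (\<Sum>x\<in>V. \<Sum>y\<in>V. \<Sum>e\<in>E. ?F e x y) + (\<Sum>x\<in>V. \<Sum>y\<in>V. v x * w y / real (card V))"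
    unfolding lap_matrix_eq sum_distrib_left sum.distrib[symmetric]
    by (intro sum.cong refl) (simp add: algebra_simps sum_distrib_left sum_distrib_right)
  also have "(\<Sum>x\<in>V. \<Sum>y\<in>V. \<Sum>e\<in>E. ?F e x y) = (\<Sum>e\<in>E. \<Sum>x\<in>V. \<Sum>y\<in>V. ?F e x y)"
    by (simp only: sum.swap[where A = V and B = E])
  also have "\<dots> = dirichlet_form E ends c v w"
    unfolding dirichlet_form_def
  proof (intro sum.cong refl)
    fix e assume "e \<in> E"
    have "(\<Sum>x\<in>V. \<Sum>y\<in>V. ?F e x y) =
        c e * ((\<Sum>x\<in>V. edge_dipole ends e x * v x) * (\<Sum>y\<in>V. edge_dipole ends e y * w y))"
      by (subst sum_product) (simp add: sum_distrib_left)
    then show "(\<Sum>x\<in>V. \<Sum>y\<in>V. ?F e x y) = c e * grad ends v e * grad ends w e"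
      using grad_eq[OF \<open>e \<in> E\<close>] by simp
  qed
  also have "(\<Sum>x\<in>V. \<Sum>y\<in>V. v x * w y / real (card V)) = (\<Sum>x\<in>V. v x) * (\<Sum>y\<in>V. w y) / real (card V)"
    by (simp add: sum_product sum_divide_distrib)
  finally show ?thesis .
qed

lemma qform_lap_matrix:
  assumes "multigraph V E ends"
  shows "qform V (lap_matrix V E ends c) v = energy E ends c v + (\<Sum>x\<in>V. v x)\<^sup>2 / real (card V)"
proof -
  have "qform V (lap_matrix V E ends c) v = (\<Sum>x\<in>V. v x * (\<Sum>y\<in>V. lap_matrix V E ends c x y * v y))"
    unfolding qform_def by (simp add: sum_distrib_left mult.assoc)
  then show ?thesis
    unfolding lap_matrix_bilinear[OF assms] dirichlet_form_self by (simp add: power2_eq_square)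
qed

lemma grad_zero_imp_const:
  assumes "\<And>e. e \<in> E \<Longrightarrow> grad ends v e = 0" and "(adj E ends)\<^sup>*\<^sup>* x y"
  shows "v y = v x"
  using assms(2)
proof (induction rule: rtranclp_induct)
  case base
  then show ?case by simp
next
  case (step y z)
  then obtain e where "e \<in> E" "ends e = (y, z) \<or> ends e = (z, y)"
    unfolding adj_def by blast
  with assms(1)[of e] step.IH show ?case
    unfolding grad_def by auto
qed

text \<open>On a connected graph only the constants have zero energy, and the added projection
  \<open>J / |V|\<close> is positive on them.\<close>

lemma lap_matrix_pos_def:
  assumes conn: "connected_mg V E ends" and cpos: "\<And>e. e \<in> E \<Longrightarrow> c e > 0"
  shows "pos_def_on V (lap_matrix V E ends c)"
  unfolding pos_def_on_def
proof (intro conjI ballI allI impI)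
  show "lap_matrix V E ends c x y = lap_matrix V E ends c y x" for x y
    by (rule lap_matrix_sym)
next
  fix v :: "'a \<Rightarrow> real"
  assume "\<exists>x\<in>V. v x \<noteq> 0"
  then obtain x0 where x0: "x0 \<in> V" "v x0 \<noteq> 0" by blast
  have mg: "multigraph V E ends" and path: "\<forall>x\<in>V. \<forall>y\<in>V. (adj E ends)\<^sup>*\<^sup>* x y"
    using conn by (auto simp: connected_mg_def)
  have n: "real (card V) > 0"
    using mg x0 by (auto simp: multigraph_def card_gt_0_iff)
  have en: "energy E ends c v \<ge> 0"
    using cpos by (intro energy_nonneg) (simp add: less_imp_le)
  show "0 < qform V (lap_matrix V E ends c) v"
  proof (rule ccontr)
    assume "\<not> ?thesis"
    then have "energy E ends c v = 0" and sum0: "(\<Sum>x\<in>V. v x)\<^sup>2 / real (card V) = 0"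
      using en n unfolding qform_lap_matrix[OF mg] by (smt (verit) divide_nonneg_pos zero_le_power2)+
    then have "\<forall>e\<in>E. c e * (grad ends v e)\<^sup>2 = 0"
      using mg cpos[THEN less_imp_le] unfolding energy_def multigraph_def
      by (subst (asm) sum_nonneg_eq_0_iff) (auto intro!: mult_nonneg_nonneg)
    then have grad0: "grad ends v e = 0" if "e \<in> E" for e
      using cpos[OF that] that by auto
    have "v y = v x0" if "y \<in> V" for y
      using grad_zero_imp_const[where E = E and v = v, OF grad0] path x0(1) that by blast
    then have "(\<Sum>x\<in>V. v x) = real (card V) * v x0"
      by simp
    then show False
      using sum0 n x0(2) by simp
  qed
qed

lemma det_lap_pos:
  assumes "connected_mg V E ends" "\<And>e. e \<in> E \<Longrightarrow> c e > 0"
  shows "det_lap V E ends c > 0"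
  unfolding det_lap_eq_det_on
  using assms by (intro det_on_pos lap_matrix_pos_def) (auto simp: connected_mg_def multigraph_def)

lemma lap_matrix_update:
  assumes "finite E" "e0 \<in> E"
  shows "lap_matrix V E ends (c(e0 := c e0 + t)) x y =
    lap_matrix V E ends c x y + t * edge_dipole ends e0 x * edge_dipole ends e0 y"
proof -
  have "(\<Sum>e\<in>E. (c(e0 := c e0 + t)) e * (edge_dipole ends e x * edge_dipole ends e y)) =
     (\<Sum>e\<in>E. c e * (edge_dipole ends e x * edge_dipole ends e y)
        + (if e = e0 then t * (edge_dipole ends e x * edge_dipole ends e y) else 0))"
    by (intro sum.cong refl) (simp add: algebra_simps)
  then show ?thesis
    unfolding lap_matrix_eq using assms by (simp add: sum.distrib mult.assoc)
qed

text \<open>The effective resistance between the endpoints of \<open>e\<close>, through the Dirichlet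
  variational principle.\<close>

definition eff_res :: "'e set \<Rightarrow> ('e \<Rightarrow> 'v \<times> 'v) \<Rightarrow> ('e \<Rightarrow> real) \<Rightarrow> 'e \<Rightarrow> real" where
  "eff_res E ends c e = (SUP f. 2 * grad ends f e - energy E ends c f)"

text \<open>The potential \<open>u\<close> of a unit current from \<open>fst (ends e)\<close> to \<open>snd (ends e)\<close>;
  the second property follows from the first because \<open>u\<close> has mean zero.\<close>

lemma unit_current_potential:
  assumes conn: "connected_mg V E ends" and cpos: "\<And>e. e \<in> E \<Longrightarrow> c e > 0" and e: "e \<in> E"
  obtains u where "\<And>w. w \<in> V \<Longrightarrow> (\<Sum>x\<in>V. lap_matrix V E ends c w x * u x) = edge_dipole ends e w"
    and "\<And>f. dirichlet_form E ends c f u = grad ends f e"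
proof -
  have mg: "multigraph V E ends" and "V \<noteq> {}"
    using conn by (auto simp: connected_mg_def)
  then have V: "finite V" and ends: "fst (ends e) \<in> V" "snd (ends e) \<in> V" and n: "real (card V) > 0"
    using e by (auto simp: multigraph_def card_gt_0_iff)
  have "det_on V (lap_matrix V E ends c) \<noteq> 0"
    using det_lap_pos[where c = c, OF conn cpos] unfolding det_lap_eq_det_on by simp
  then obtain u where u: "\<forall>w\<in>V. (\<Sum>x\<in>V. lap_matrix V E ends c w x * u x) = edge_dipole ends e w"
    using det_on_solvable[OF V] by blast
  have pair: "dirichlet_form E ends c f u + (\<Sum>x\<in>V. f x) * (\<Sum>y\<in>V. u y) / real (card V) = grad ends f e" for f
  proof -
    have "dirichlet_form E ends c f u + (\<Sum>x\<in>V. f x) * (\<Sum>y\<in>V. u y) / real (card V) =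
        (\<Sum>x\<in>V. edge_dipole ends e x * f x)"
      unfolding lap_matrix_bilinear[OF mg, symmetric] using u by (intro sum.cong refl) simp
    also have "\<dots> = grad ends f e"
      unfolding grad_def using V ends by (rule sum_dipole_mult)
    finally show ?thesis .
  qed
  have "(\<Sum>y\<in>V. u y) = 0"
    using pair[of "\<lambda>_. 1"] n by (simp add: dirichlet_form_def grad_def)
  with pair have "\<And>f. dirichlet_form E ends c f u = grad ends f e"
    by simp
  with u show ?thesis
    by (intro that) auto
qed

lemma eff_res_eq_grad_potential:
  assumes cnn: "\<And>e. e \<in> E \<Longrightarrow> c e \<ge> 0" and u: "\<And>f. dirichlet_form E ends c f u = grad ends f e"
  shows "eff_res E ends c e = grad ends u e" and "2 * grad ends f e - energy E ends c f \<le> eff_res E ends c e"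
proof -
  have en_u: "energy E ends c u = grad ends u e"
    using u[of u] by (simp add: dirichlet_form_self)
  have le: "2 * grad ends f e - energy E ends c f \<le> grad ends u e" for f
  proof -
    have "0 \<le> energy E ends c (\<lambda>x. f x - u x)"
      by (rule energy_nonneg) (rule cnn)
    then show ?thesis
      unfolding energy_diff u en_u by simp
  qed
  show eq: "eff_res E ends c e = grad ends u e"
    unfolding eff_res_def using en_u le by (intro cSup_eq_maximum) (auto intro!: image_eqI[where x = u])
  show "2 * grad ends f e - energy E ends c f \<le> eff_res E ends c e"
    unfolding eq by (rule le)
qed

lemma eff_res_ge:
  assumes "connected_mg V E ends" "\<And>e. e \<in> E \<Longrightarrow> c e > 0" "e \<in> E"
  shows "2 * grad ends f e - energy E ends c f \<le> eff_res E ends c e"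
proof -
  obtain u where "\<And>f. dirichlet_form E ends c f u = grad ends f e"
    using unit_current_potential[where c = c, OF assms] by blast
  then show ?thesis
    by (rule eff_res_eq_grad_potential(2)[rotated]) (simp add: assms(2) less_imp_le)
qed

lemma eff_res_nonneg:
  assumes "connected_mg V E ends" "\<And>e. e \<in> E \<Longrightarrow> c e > 0" "e \<in> E"
  shows "eff_res E ends c e \<ge> 0"
  using eff_res_ge[where c = c, OF assms, where f = "\<lambda>_. 0"] by (simp add: grad_def energy_def)

lemma det_lap_update_edge:
  assumes conn: "connected_mg V E ends" and cpos: "\<And>e. e \<in> E \<Longrightarrow> c e > 0" and e: "e \<in> E"
  shows "det_lap V E ends (c(e := c e + t)) = det_lap V E ends c * (1 + t * eff_res E ends c e)"
proof -
  obtain u where sol: "\<And>w. w \<in> V \<Longrightarrow> (\<Sum>x\<in>V. lap_matrix V E ends c w x * u x) = edge_dipole ends e w"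
    and pot: "\<And>f. dirichlet_form E ends c f u = grad ends f e"
    using unit_current_potential[where c = c, OF assms] by blast
  have V: "finite V" and E: "finite E" and ends: "fst (ends e) \<in> V" "snd (ends e) \<in> V"
    using conn e by (auto simp: connected_mg_def multigraph_def)
  have "det_lap V E ends (c(e := c e + t)) =
      det_on V (\<lambda>x y. lap_matrix V E ends c x y + t * edge_dipole ends e x * edge_dipole ends e y)"
    unfolding det_lap_eq_det_on lap_matrix_update[OF E e] ..
  also have "\<dots> = det_lap V E ends c * (1 + t * grad ends u e)"
    unfolding det_lap_eq_det_on grad_def
    by (rule det_on_rank_one_update[OF V ends lap_matrix_sym sol])
  also have "grad ends u e = eff_res E ends c e"
    using eff_res_eq_grad_potential(1)[OF _ pot] cpos by (simp add: less_imp_le)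
  finally show ?thesis .
qed

lemma eff_res_mono:
  assumes "connected_mg V1 E1 ends1" "\<And>e. e \<in> E1 \<Longrightarrow> c1 e > 0" "e \<in> E1"
    and match: "\<And>f2. \<exists>f1. grad ends1 f1 e = grad ends2 f2 e \<and> energy E1 ends1 c1 f1 \<le> energy E2 ends2 c2 f2"
  shows "eff_res E2 ends2 c2 e \<le> eff_res E1 ends1 c1 e"
  unfolding eff_res_def[of E2]
proof (rule cSUP_least)
  fix f2
  obtain f1 where "grad ends1 f1 e = grad ends2 f2 e" "energy E1 ends1 c1 f1 \<le> energy E2 ends2 c2 f2"
    using match by blast
  moreover have "2 * grad ends1 f1 e - energy E1 ends1 c1 f1 \<le> eff_res E1 ends1 c1 e"
    by (rule eff_res_ge[OF assms(1) _ assms(3)]) (rule assms(2))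
  ultimately show "2 * grad ends2 f2 e - energy E2 ends2 c2 f2 \<le> eff_res E1 ends1 c1 e"
    by linarith
qed simp

section \<open>Holley's inequality on \<open>{1, q}\<^sup>D\<close>\<close>

lemma finite_cfgs: "finite D \<Longrightarrow> finite (cfgs D)"
proof -
  assume "finite D"
  moreover have "cfgs D \<subseteq> (\<lambda>S e. e \<in> S) ` Pow D"
  proof
    fix \<omega> assume "\<omega> \<in> cfgs D"
    then have "\<omega> = (\<lambda>e. e \<in> {e\<in>D. \<omega> e})" by (auto simp: cfgs_def fun_eq_iff)
    then show "\<omega> \<in> (\<lambda>S e. e \<in> S) ` Pow D" by blast
  qed
  ultimately show ?thesis by (meson finite_Pow_iff finite_imageI finite_subset)
qed

lemma sup_in_cfgs: "x \<in> cfgs D \<Longrightarrow> y \<in> cfgs D \<Longrightarrow> sup x y \<in> cfgs D"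
  and inf_in_cfgs: "x \<in> cfgs D \<Longrightarrow> inf x y \<in> cfgs D"
  by (auto simp: cfgs_def)

lemma cfgs_empty: "cfgs {} = {\<lambda>_. False}"
  by (auto simp: cfgs_def fun_eq_iff)

lemma sum_cfgs_insert:
  assumes "a \<notin> D" "finite D"
  shows "sum g (cfgs (insert a D)) = (\<Sum>x\<in>cfgs D. g x + g (x(a := True)))"
proof -
  have split: "cfgs (insert a D) = cfgs D \<union> (\<lambda>x. x(a := True)) ` cfgs D"
  proof (intro equalityI subsetI)
    fix x assume x: "x \<in> cfgs (insert a D)"
    have "x(a := False) \<in> cfgs D" and "x = (if x a then (x(a := False))(a := True) else x(a := False))"
      using x by (auto simp: cfgs_def fun_eq_iff)
    then show "x \<in> cfgs D \<union> (\<lambda>x. x(a := True)) ` cfgs D"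
      by (metis (no_types, lifting) UnI1 UnI2 image_eqI)
  qed (auto simp: cfgs_def)
  have "inj_on (\<lambda>x. x(a := True)) (cfgs D)"
    using assms(1) by (auto simp: inj_on_def cfgs_def fun_eq_iff)
  moreover have "cfgs D \<inter> (\<lambda>x. x(a := True)) ` cfgs D = {}"
    using assms(1) by (auto simp: cfgs_def)
  ultimately show ?thesis
    unfolding split using finite_cfgs[OF assms(2)]
    by (simp add: sum.union_disjoint sum.reindex sum.distrib)
qed

text \<open>The case \<open>|D| = 1\<close> of the four functions theorem.\<close>

lemma ahlswede_daykin_two_point:
  fixes a0 a1 b0 b1 c0 c1 d0 d1 :: real
  assumes nn: "0 \<le> a0" "0 \<le> a1" "0 \<le> b0" "0 \<le> b1" "0 \<le> c0" "0 \<le> c1" "0 \<le> d0" "0 \<le> d1"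
    and h00: "a0 * b0 \<le> c0 * d0" and h01: "a0 * b1 \<le> c1 * d0" and h10: "a1 * b0 \<le> c1 * d0"
    and h11: "a1 * b1 \<le> c1 * d1"
  shows "(a0 + a1) * (b0 + b1) \<le> (c0 + c1) * (d0 + d1)"
proof -
  have mid: "a0 * b1 + a1 * b0 \<le> c1 * d0 + c0 * d1"
  proof (cases "c1 * d0 = 0")
    case True
    then show ?thesis
      using h01 h10 nn by (smt (verit) mult_nonneg_nonneg)
  next
    case False
    define T where "T = c1 * d0"
    have T: "T > 0" using False nn unfolding T_def by (simp add: less_le)
    define u v where "u = a0 * b1" and "v = a1 * b0"
    have u: "0 \<le> u" "u \<le> T" and v: "0 \<le> v" "v \<le> T"
      using nn h01 h10 by (simp_all add: u_def v_def T_def)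
    have "u * v = (a0 * b0) * (a1 * b1)" by (simp add: u_def v_def mult_ac)
    also have "\<dots> \<le> (c0 * d0) * (c1 * d1)"
      by (rule mult_mono[OF h00 h11]) (use nn in simp_all)
    also have "\<dots> = (c0 * d1) * T" by (simp add: T_def mult_ac)
    finally have uv: "u * v \<le> (c0 * d1) * T" .
    have "T * (u + v) \<le> T * T + u * v"
      using mult_nonneg_nonneg[of "T - u" "T - v"] u v by (simp add: algebra_simps)
    also have "\<dots> \<le> T * (T + c0 * d1)"
      using uv by (simp add: algebra_simps)
    finally show ?thesis
      using T unfolding u_def v_def T_def by (simp add: mult_le_cancel_left_pos add.commute)
  qed
  show ?thesis
    using h00 mid h11 by (simp add: algebra_simps)
qed

text \<open>By induction on \<open>D\<close>: summing out one coordinate reduces to the two-point case.\<close>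

lemma ahlswede_daykin:
  fixes \<alpha> \<beta> \<gamma> \<delta> :: "('e \<Rightarrow> bool) \<Rightarrow> real"
  assumes "finite D"
    and "\<forall>x\<in>cfgs D. 0 \<le> \<alpha> x \<and> 0 \<le> \<beta> x \<and> 0 \<le> \<gamma> x \<and> 0 \<le> \<delta> x"
    and "\<forall>x\<in>cfgs D. \<forall>y\<in>cfgs D. \<alpha> x * \<beta> y \<le> \<gamma> (sup x y) * \<delta> (inf x y)"
  shows "sum \<alpha> (cfgs D) * sum \<beta> (cfgs D) \<le> sum \<gamma> (cfgs D) * sum \<delta> (cfgs D)"
  using assms
proof (induction D arbitrary: \<alpha> \<beta> \<gamma> \<delta> rule: finite_induct)
  case empty
  then show ?case by (simp add: cfgs_empty)
next
  case (insert a D)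
  note nn = insert.prems(1) and hyp = insert.prems(2)
  let ?u = "\<lambda>x. x(a := True)"
  have sub: "x \<in> cfgs (insert a D)" and subu: "?u x \<in> cfgs (insert a D)"
    and xa: "\<not> x a" if "x \<in> cfgs D" for x
    using that insert.hyps by (auto simp: cfgs_def)
  have IH: "(\<Sum>x\<in>cfgs D. \<alpha> x + \<alpha> (?u x)) * (\<Sum>x\<in>cfgs D. \<beta> x + \<beta> (?u x))
      \<le> (\<Sum>x\<in>cfgs D. \<gamma> x + \<gamma> (?u x)) * (\<Sum>x\<in>cfgs D. \<delta> x + \<delta> (?u x))"
  proof (rule insert.IH)
    show "\<forall>x\<in>cfgs D. 0 \<le> \<alpha> x + \<alpha> (?u x) \<and> 0 \<le> \<beta> x + \<beta> (?u x)
        \<and> 0 \<le> \<gamma> x + \<gamma> (?u x) \<and> 0 \<le> \<delta> x + \<delta> (?u x)"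
      using nn sub subu by (meson add_nonneg_nonneg)
    show "\<forall>x\<in>cfgs D. \<forall>y\<in>cfgs D. (\<alpha> x + \<alpha> (?u x)) * (\<beta> y + \<beta> (?u y))
        \<le> (\<gamma> (sup x y) + \<gamma> (?u (sup x y))) * (\<delta> (inf x y) + \<delta> (?u (inf x y)))"
    proof (intro ballI)
      fix x y assume x: "x \<in> cfgs D" and y: "y \<in> cfgs D"
      have lat: "sup x (?u y) = ?u (sup x y)" "sup (?u x) y = ?u (sup x y)" "sup (?u x) (?u y) = ?u (sup x y)"
        "inf x (?u y) = inf x y" "inf (?u x) y = inf x y" "inf (?u x) (?u y) = ?u (inf x y)"
        using xa[OF x] xa[OF y] by (auto simp: fun_eq_iff)
      have h: "\<alpha> x' * \<beta> y' \<le> \<gamma> (sup x' y') * \<delta> (inf x' y')"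
        if "x' \<in> {x, ?u x}" "y' \<in> {y, ?u y}" for x' y'
        using hyp that x y sub subu by blast
      have "sup x y \<in> cfgs D" "inf x y \<in> cfgs D"
        using x y by (auto intro: sup_in_cfgs inf_in_cfgs)
      then show "(\<alpha> x + \<alpha> (?u x)) * (\<beta> y + \<beta> (?u y))
          \<le> (\<gamma> (sup x y) + \<gamma> (?u (sup x y))) * (\<delta> (inf x y) + \<delta> (?u (inf x y)))"
        using h[of x y] h[of x "?u y"] h[of "?u x" y] h[of "?u x" "?u y"] nn x y sub subu
        by (intro ahlswede_daykin_two_point) (simp_all add: lat)
    qed
  qed
  then show ?case
    unfolding sum_cfgs_insert[OF insert.hyps(2,1)] .
qed

lemma holley_inequality:
  fixes w1 w2 :: "('e \<Rightarrow> bool) \<Rightarrow> real"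
  assumes D: "finite D" and nn: "\<forall>x\<in>cfgs D. 0 \<le> w1 x \<and> 0 \<le> w2 x"
    and Z1: "sum w1 (cfgs D) > 0" and Z2: "sum w2 (cfgs D) > 0"
    and lat: "\<forall>x\<in>cfgs D. \<forall>y\<in>cfgs D. w1 x * w2 y \<le> w2 (sup x y) * w1 (inf x y)"
    and A: "increasing_event D A"
  shows "sum w1 (A \<inter> cfgs D) / sum w1 (cfgs D) \<le> sum w2 (A \<inter> cfgs D) / sum w2 (cfgs D)"
proof -
  define \<alpha> where "\<alpha> x = (if x \<in> A then w1 x else 0)" for x
  define \<gamma> where "\<gamma> x = (if x \<in> A then w2 x else 0)" for x
  have up: "sup x y \<in> A" if "x \<in> A" "y \<in> cfgs D" for x y
    using A that sup_in_cfgs[of x D y] unfolding increasing_event_def by auto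
  have "sum \<alpha> (cfgs D) * sum w2 (cfgs D) \<le> sum \<gamma> (cfgs D) * sum w1 (cfgs D)"
  proof (rule ahlswede_daykin[OF D])
    show "\<forall>x\<in>cfgs D. 0 \<le> \<alpha> x \<and> 0 \<le> w2 x \<and> 0 \<le> \<gamma> x \<and> 0 \<le> w1 x"
      using nn by (auto simp: \<alpha>_def \<gamma>_def)
    show "\<forall>x\<in>cfgs D. \<forall>y\<in>cfgs D. \<alpha> x * w2 y \<le> \<gamma> (sup x y) * w1 (inf x y)"
    proof (intro ballI)
      fix x y assume x: "x \<in> cfgs D" and y: "y \<in> cfgs D"
      have "sup x y \<in> cfgs D" "inf x y \<in> cfgs D"
        using x y by (auto intro: sup_in_cfgs inf_in_cfgs)
      then show "\<alpha> x * w2 y \<le> \<gamma> (sup x y) * w1 (inf x y)"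
        using lat up[OF _ y] nn x y by (auto simp: \<alpha>_def \<gamma>_def intro!: mult_nonneg_nonneg)
    qed
  qed
  moreover have "sum \<alpha> (cfgs D) = sum w1 (A \<inter> cfgs D)" "sum \<gamma> (cfgs D) = sum w2 (A \<inter> cfgs D)"
    unfolding \<alpha>_def \<gamma>_def
    using sum.inter_restrict[OF finite_cfgs[OF D], of w1 A] sum.inter_restrict[OF finite_cfgs[OF D], of w2 A]
    by (simp_all add: Int_commute)
  ultimately show ?thesis
    using Z1 Z2 by (simp add: field_simps)
qed

lemma holley_lattice_condition_step:
  fixes w1 w2 :: "('e \<Rightarrow> bool) \<Rightarrow> real"
  assumes pos: "\<forall>x\<in>cfgs D. 0 < w1 x \<and> 0 < w2 x"
    and single_site: "\<forall>x\<in>cfgs D. \<forall>y\<in>cfgs D. \<forall>e\<in>D. x \<le> y \<longrightarrow> \<not> y e \<longrightarrow>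
        w1 (x(e := True)) * w2 y \<le> w1 x * w2 (y(e := True))"
    and x: "x \<in> cfgs D" and y: "y \<in> cfgs D" and e: "e \<in> D" "\<not> x e" "\<not> y e"
    and IH: "w1 x * w2 y \<le> w1 (inf x y) * w2 (sup x y)"
  shows "w1 (x(e := True)) * w2 y \<le> w1 (inf (x(e := True)) y) * w2 (sup (x(e := True)) y)"
proof -
  let ?x = "x(e := True)"
  have lat: "inf ?x y = inf x y" "sup ?x y = (sup x y)(e := True)"
    using e by (auto simp: fun_eq_iff)
  have "?x \<in> cfgs D" "sup x y \<in> cfgs D" "inf x y \<in> cfgs D"
    using x y e(1) by (auto simp: cfgs_def)
  then have nonneg: "0 \<le> w1 ?x" "0 < w1 x" "0 \<le> w1 (inf x y)"
    using pos x by (auto intro: less_imp_le)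
  have step: "w1 ?x * w2 (sup x y) \<le> w1 x * w2 (sup ?x y)"
    using single_site x \<open>sup x y \<in> cfgs D\<close> e unfolding lat by simp
  have "w1 x * (w1 ?x * w2 y) = w1 ?x * (w1 x * w2 y)"
    by (simp add: mult_ac)
  also have "\<dots> \<le> w1 ?x * (w1 (inf x y) * w2 (sup x y))"
    by (rule mult_left_mono[OF IH nonneg(1)])
  also have "\<dots> = w1 (inf x y) * (w1 ?x * w2 (sup x y))"
    by (simp add: mult_ac)
  also have "\<dots> \<le> w1 (inf x y) * (w1 x * w2 (sup ?x y))"
    by (rule mult_left_mono[OF step nonneg(3)])
  also have "\<dots> = w1 x * (w1 (inf ?x y) * w2 (sup ?x y))"
    by (simp add: lat mult_ac)
  finally show ?thesis
    using nonneg(2) by (simp add: mult_le_cancel_left_pos)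
qed

text \<open>Raise \<open>inf x y\<close> to \<open>x\<close> one coordinate at a time.\<close>

lemma holley_lattice_condition:
  fixes w1 w2 :: "('e \<Rightarrow> bool) \<Rightarrow> real"
  assumes D: "finite D" and pos: "\<forall>x\<in>cfgs D. 0 < w1 x \<and> 0 < w2 x"
    and single_site: "\<forall>x\<in>cfgs D. \<forall>y\<in>cfgs D. \<forall>e\<in>D. x \<le> y \<longrightarrow> \<not> y e \<longrightarrow>
        w1 (x(e := True)) * w2 y \<le> w1 x * w2 (y(e := True))"
    and x: "x \<in> cfgs D" and y: "y \<in> cfgs D"
  shows "w1 x * w2 y \<le> w2 (sup x y) * w1 (inf x y)"
proof -
  have "\<forall>x\<in>cfgs D. card {e\<in>D. x e \<and> \<not> y e} = n \<longrightarrow> w1 x * w2 y \<le> w1 (inf x y) * w2 (sup x y)" for n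
  proof (induction n)
    case 0
    show ?case
    proof (intro ballI impI)
      fix x assume "x \<in> cfgs D" "card {e\<in>D. x e \<and> \<not> y e} = 0"
      then have "x \<le> y"
        using D by (auto simp: cfgs_def le_fun_def)
      then show "w1 x * w2 y \<le> w1 (inf x y) * w2 (sup x y)"
        by (simp add: inf_absorb1 sup_absorb2)
    qed
  next
    case (Suc n)
    show ?case
    proof (intro ballI impI)
      fix x assume x: "x \<in> cfgs D" and card: "card {e\<in>D. x e \<and> \<not> y e} = Suc n"
      then obtain e where e: "e \<in> D" "x e" "\<not> y e"
        by (metis (no_types, lifting) Collect_empty_eq card.empty nat.distinct(1))
      define x' where "x' = x(e := False)"
      have x': "x' \<in> cfgs D" "\<not> x' e" and x_eq: "x = x'(e := True)"
        using x e by (auto simp: cfgs_def x'_def fun_eq_iff)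
      have "{e'\<in>D. x' e' \<and> \<not> y e'} = {e'\<in>D. x e' \<and> \<not> y e'} - {e}"
        by (auto simp: x'_def)
      then have "card {e'\<in>D. x' e' \<and> \<not> y e'} = n"
        using card e D by simp
      then have "w1 x' * w2 y \<le> w1 (inf x' y) * w2 (sup x' y)"
        using Suc.IH x'(1) by blast
      then show "w1 x * w2 y \<le> w1 (inf x y) * w2 (sup x y)"
        unfolding x_eq by (rule holley_lattice_condition_step[OF pos single_site x'(1) y e(1) x'(2) e(3)])
    qed
  qed
  then show ?thesis
    using x by (simp add: mult.commute)
qed

lemma holley_single_site:
  fixes w1 w2 :: "('e \<Rightarrow> bool) \<Rightarrow> real"
  assumes D: "finite D" and pos: "\<forall>x\<in>cfgs D. 0 < w1 x \<and> 0 < w2 x"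
    and single_site: "\<forall>x\<in>cfgs D. \<forall>y\<in>cfgs D. \<forall>e\<in>D. x \<le> y \<longrightarrow> \<not> y e \<longrightarrow>
        w1 (x(e := True)) * w2 y \<le> w1 x * w2 (y(e := True))"
  shows "dominated D (\<lambda>A. sum w1 (A \<inter> cfgs D) / sum w1 (cfgs D))
    (\<lambda>A. sum w2 (A \<inter> cfgs D) / sum w2 (cfgs D))"
  unfolding dominated_def
proof (intro allI impI)
  fix A assume A: "increasing_event D A"
  have "(\<lambda>_. False) \<in> cfgs D"
    by (simp add: cfgs_def)
  then have "sum w1 (cfgs D) > 0" "sum w2 (cfgs D) > 0"
    using pos finite_cfgs[OF D] by (auto intro!: sum_pos2)
  moreover have "\<forall>x\<in>cfgs D. \<forall>y\<in>cfgs D. w1 x * w2 y \<le> w2 (sup x y) * w1 (inf x y)"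
    using holley_lattice_condition[OF D pos single_site] by blast
  ultimately show "sum w1 (A \<inter> cfgs D) / sum w1 (cfgs D) \<le> sum w2 (A \<inter> cfgs D) / sum w2 (cfgs D)"
    using pos A by (intro holley_inequality[OF D]) (auto intro: less_imp_le)
qed

section \<open>Comparison of the random conductance measures\<close>

lemma cond_pos: "q \<ge> 1 \<Longrightarrow> cond q b > 0"
  by (simp add: cond_def)

abbreviation conductances :: "real \<Rightarrow> 'e set \<Rightarrow> ('e \<Rightarrow> bool) \<Rightarrow> ('e \<Rightarrow> bool) \<Rightarrow> 'e \<Rightarrow> real" where
  "conductances q D bc \<kappa> \<equiv> \<lambda>e. cond q (glue D bc \<kappa> e)"

lemma conductances_mono:
  assumes "q \<ge> 1" "\<kappa> \<le> \<kappa>'" "e \<notin> D \<Longrightarrow> bc e \<Longrightarrow> bc' e"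
  shows "conductances q D bc \<kappa> e \<le> conductances q D bc' \<kappa>' e"
  using assms by (auto simp: glue_def cond_def le_fun_def)

lemma det_lap_cong:
  assumes "\<And>e. e \<in> E \<Longrightarrow> c e = c' e"
  shows "det_lap V E ends c = det_lap V E ends c'"
  unfolding det_lap_def laplacian_def using assms by simp

lemma Pfree_eq_Pbc: "Pfree p q V E ends = Pbc p q V E ends E bc"
proof -
  have "weight p q V E ends E (\<lambda>_. False) \<kappa> = weight p q V E ends E bc \<kappa>" for \<kappa>
    unfolding weight_def by (subst det_lap_cong[where c' = "conductances q E bc \<kappa>"]) (auto simp: glue_def)
  then show ?thesis
    unfolding Pfree_def Pbc_def[abs_def] by simp
qed

lemma weight_pos:
  assumes "connected_mg V E ends" "q \<ge> 1" "0 < p" "p < 1"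
  shows "weight p q V E ends D bc \<kappa> > 0"
  using assms det_lap_pos[OF assms(1), of "conductances q D bc \<kappa>"] cond_pos
  unfolding weight_def by simp

lemma weight_raise_edge:
  assumes conn: "connected_mg V E ends" and q: "q \<ge> 1" and p: "0 < p" "p < 1"
    and D: "D \<subseteq> E" and e: "e \<in> D" and \<kappa>e: "\<not> \<kappa> e"
  shows "weight p q V E ends D bc (\<kappa>(e := True)) * (1 - p) =
    weight p q V E ends D bc \<kappa> * p * (1 + (q - 1) * eff_res E ends (conductances q D bc \<kappa>) e) powr (-1/2)"
proof -
  have fD: "finite D"
    using conn D by (auto simp: connected_mg_def multigraph_def intro: finite_subset)
  define c where "c = conductances q D bc \<kappa>"
  define R where "R = eff_res E ends c e"
  have c_raised: "conductances q D bc (\<kappa>(e := True)) = c(e := c e + (q - 1))"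
    using e \<kappa>e by (auto simp: c_def glue_def cond_def fun_eq_iff)
  have det: "det_lap V E ends (c(e := c e + (q - 1))) = det_lap V E ends c * (1 + (q - 1) * R)"
    unfolding R_def using conn D e q by (intro det_lap_update_edge) (auto simp: c_def cond_pos)
  have "0 < det_lap V E ends c" "0 \<le> R"
    unfolding R_def c_def using conn D e q by (auto intro!: det_lap_pos eff_res_nonneg simp: cond_pos)
  moreover have "{e'\<in>D. (\<kappa>(e := True)) e'} = insert e {e'\<in>D. \<kappa> e'}"
    and "{e'\<in>D. \<not> \<kappa> e'} = insert e {e'\<in>D. \<not> (\<kappa>(e := True)) e'}"
    using e \<kappa>e by auto
  ultimately show ?thesis
    unfolding weight_def hcount_def scount_def c_raised det
    using fD \<kappa>e by (simp add: c_def R_def powr_mult mult_ac)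
qed

lemma weight_single_site_le:
  fixes ends1 :: "'e \<Rightarrow> 'v1 \<times> 'v1" and ends2 :: "'e \<Rightarrow> 'v2 \<times> 'v2"
  assumes conn1: "connected_mg V1 E1 ends1" and conn2: "connected_mg V2 E2 ends2"
    and D1: "D \<subseteq> E1" and D2: "D \<subseteq> E2" and q: "q \<ge> 1" and p: "0 < p" "p < 1"
    and e: "e \<in> D" and le: "\<kappa> \<le> \<kappa>'" and \<kappa>'e: "\<not> \<kappa>' e"
    and res: "eff_res E2 ends2 (conductances q D bc2 \<kappa>') e \<le> eff_res E1 ends1 (conductances q D bc1 \<kappa>) e"
  shows "weight p q V1 E1 ends1 D bc1 (\<kappa>(e := True)) * weight p q V2 E2 ends2 D bc2 \<kappa>'
    \<le> weight p q V1 E1 ends1 D bc1 \<kappa> * weight p q V2 E2 ends2 D bc2 (\<kappa>'(e := True))"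
proof -
  let ?w1 = "weight p q V1 E1 ends1 D bc1" and ?w2 = "weight p q V2 E2 ends2 D bc2"
  define R1 R2 where "R1 = eff_res E1 ends1 (conductances q D bc1 \<kappa>) e"
    and "R2 = eff_res E2 ends2 (conductances q D bc2 \<kappa>') e"
  have \<kappa>e: "\<not> \<kappa> e"
    using le \<kappa>'e by (auto simp: le_fun_def)
  have "0 \<le> R2"
    unfolding R2_def using conn2 D2 e q by (intro eff_res_nonneg) (auto simp: cond_pos)
  with res have K: "(1 + (q - 1) * R1) powr (-1/2) \<le> (1 + (q - 1) * R2) powr (-1/2)"
    unfolding R1_def[symmetric] R2_def[symmetric]
    using q by (intro powr_mono2') (auto intro: add_pos_nonneg mult_left_mono)
  have "(?w1 (\<kappa>(e := True)) * ?w2 \<kappa>') * (1 - p) = ?w1 \<kappa> * ?w2 \<kappa>' * p * (1 + (q - 1) * R1) powr (-1/2)"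
    unfolding R1_def using weight_raise_edge[where \<kappa> = \<kappa> and bc = bc1, OF conn1 q p D1 e \<kappa>e]
    by (simp add: mult_ac)
  also have "\<dots> \<le> ?w1 \<kappa> * ?w2 \<kappa>' * p * (1 + (q - 1) * R2) powr (-1/2)"
    using weight_pos[OF conn1 q p] weight_pos[OF conn2 q p] p
    by (intro mult_left_mono[OF K] mult_nonneg_nonneg less_imp_le) auto
  also have "\<dots> = (?w1 \<kappa> * ?w2 (\<kappa>'(e := True))) * (1 - p)"
    unfolding R2_def using weight_raise_edge[where \<kappa> = \<kappa>' and bc = bc2, OF conn2 q p D2 e \<kappa>'e]
    by (simp add: mult_ac)
  finally show ?thesis
    using p by simp
qed

lemma Pbc_dominated_if_eff_res_le:
  fixes ends1 :: "'e \<Rightarrow> 'v1 \<times> 'v1" and ends2 :: "'e \<Rightarrow> 'v2 \<times> 'v2"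
  assumes conn1: "connected_mg V1 E1 ends1" and conn2: "connected_mg V2 E2 ends2"
    and D1: "D \<subseteq> E1" and D2: "D \<subseteq> E2" and q: "q \<ge> 1" and p: "0 < p" "p < 1"
    and res: "\<And>\<kappa> \<kappa>' e. \<kappa> \<in> cfgs D \<Longrightarrow> \<kappa>' \<in> cfgs D \<Longrightarrow> \<kappa> \<le> \<kappa>' \<Longrightarrow> e \<in> D \<Longrightarrow>
       eff_res E2 ends2 (conductances q D bc2 \<kappa>') e \<le> eff_res E1 ends1 (conductances q D bc1 \<kappa>) e"
  shows "dominated D (Pbc p q V1 E1 ends1 D bc1) (Pbc p q V2 E2 ends2 D bc2)"
  unfolding Pbc_def[abs_def]
proof (rule holley_single_site)
  show "finite D"
    using conn1 D1 by (auto simp: connected_mg_def multigraph_def intro: finite_subset)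
  show "\<forall>x\<in>cfgs D. 0 < weight p q V1 E1 ends1 D bc1 x \<and> 0 < weight p q V2 E2 ends2 D bc2 x"
    using weight_pos[OF conn1 q p] weight_pos[OF conn2 q p] by blast
  show "\<forall>\<kappa>\<in>cfgs D. \<forall>\<kappa>'\<in>cfgs D. \<forall>e\<in>D. \<kappa> \<le> \<kappa>' \<longrightarrow> \<not> \<kappa>' e \<longrightarrow>
      weight p q V1 E1 ends1 D bc1 (\<kappa>(e := True)) * weight p q V2 E2 ends2 D bc2 \<kappa>'
      \<le> weight p q V1 E1 ends1 D bc1 \<kappa> * weight p q V2 E2 ends2 D bc2 (\<kappa>'(e := True))"
    using weight_single_site_le[OF conn1 conn2 D1 D2 q p] res by blast
qed

lemma energy_mono:
  assumes "finite E2" "E1 \<subseteq> E2" "\<And>e. e \<in> E1 \<Longrightarrow> c1 e \<le> c2 e" "\<And>e. e \<in> E2 \<Longrightarrow> 0 \<le> c2 e"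
  shows "energy E1 ends c1 f \<le> energy E2 ends c2 f"
proof -
  have "energy E1 ends c1 f \<le> energy E1 ends c2 f"
    unfolding energy_def by (intro sum_mono mult_right_mono) (use assms in auto)
  also have "\<dots> \<le> energy E2 ends c2 f"
    unfolding energy_def by (intro sum_mono2) (use assms in auto)
  finally show ?thesis .
qed

lemma Pbc_dominated_subgraph:
  assumes G': "connected_mg V' E' ends" and G: "connected_mg V E ends"
    and E': "E' \<subseteq> E" and D: "D \<subseteq> E'" and q: "q \<ge> 1" and p: "0 < p" "p < 1"
    and lam: "\<forall>e\<in>E'. lam1 e \<longrightarrow> lam2 e"
  shows "dominated D (Pbc p q V' E' ends D lam1) (Pbc p q V E ends D lam2)"
proof (rule Pbc_dominated_if_eff_res_le[OF G' G D _ q p])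
  show "D \<subseteq> E"
    using D E' by blast
  fix \<kappa> \<kappa>' e assume "\<kappa> \<in> cfgs D" "\<kappa>' \<in> cfgs D" "\<kappa> \<le> \<kappa>'" and e: "e \<in> D"
  have en: "energy E' ends (conductances q D lam1 \<kappa>) f \<le> energy E ends (conductances q D lam2 \<kappa>') f" for f
    using G E' lam \<open>\<kappa> \<le> \<kappa>'\<close> q
    by (intro energy_mono) (auto simp: connected_mg_def multigraph_def cond_pos less_imp_le
        intro: conductances_mono)
  show "eff_res E ends (conductances q D lam2 \<kappa>') e \<le> eff_res E' ends (conductances q D lam1 \<kappa>) e"
    by (rule eff_res_mono[OF G']) (use en q D e in \<open>auto simp: cond_pos\<close>)
qed

lemma contr_class_eq_if_adj:
  assumes "adj F ends a b"
  shows "contr_class V F ends a = contr_class V F ends b"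
proof -
  have "adj F ends b a"
    using assms by (auto simp: adj_def)
  then show ?thesis
    using assms unfolding contr_class_def by (blast intro: converse_rtranclp_into_rtranclp)
qed

lemma contr_class_edge:
  "e \<in> F \<Longrightarrow> contr_class V F ends (fst (ends e)) = contr_class V F ends (snd (ends e))"
  by (rule contr_class_eq_if_adj) (auto simp: adj_def)

lemma connected_contraction:
  assumes conn: "connected_mg V E ends" and F: "F \<subseteq> E"
  shows "connected_mg (contr_V V F ends) (contr_E E F) (contr_ends V F ends)"
proof -
  let ?cls = "contr_class V F ends" and ?adj = "adj (contr_E E F) (contr_ends V F ends)"
  have walk: "?adj\<^sup>*\<^sup>* (?cls x) (?cls z)" if "(adj E ends)\<^sup>*\<^sup>* x z" for x z
    using that
  proof (induction rule: rtranclp_induct)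
    case base
    then show ?case by simp
  next
    case (step y z)
    then obtain e where e: "e \<in> E" "ends e = (y, z) \<or> ends e = (z, y)"
      unfolding adj_def by blast
    show ?case
    proof (cases "e \<in> F")
      case True
      then have "?cls y = ?cls z"
        using contr_class_edge[OF True, of V ends] e(2) by auto
      then show ?thesis
        using step.IH by simp
    next
      case False
      then have "?adj (?cls y) (?cls z)"
        unfolding adj_def contr_E_def contr_ends_def using e by (intro bexI[of _ e]) auto
      then show ?thesis
        using step.IH by simp
    qed
  qed
  then show ?thesis
    using conn unfolding connected_mg_def multigraph_def contr_V_def contr_E_def contr_ends_def
    by auto
qed

text \<open>A potential on \<open>G/F\<close> lifts to \<open>G\<close>, constant on the classes, so its energy on the
  contracted edges vanishes.\<close>

lemma Pbc_dominated_contraction: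
  assumes G: "connected_mg V E ends" and F: "F \<subseteq> E" and D: "D \<subseteq> E" "D \<inter> F = {}"
    and q: "q \<ge> 1" and p: "0 < p" "p < 1"
  shows "dominated D (Pbc p q V E ends D lam)
    (Pbc p q (contr_V V F ends) (contr_E E F) (contr_ends V F ends) D lam)"
proof (rule Pbc_dominated_if_eff_res_le[OF G connected_contraction[OF G F] D(1) _ q p])
  show "D \<subseteq> contr_E E F"
    using D by (auto simp: contr_E_def)
  fix \<kappa> \<kappa>' e assume "\<kappa> \<in> cfgs D" "\<kappa>' \<in> cfgs D" "\<kappa> \<le> \<kappa>'" and e: "e \<in> D"
  let ?ends' = "contr_ends V F ends" and ?c = "conductances q D lam \<kappa>" and ?c' = "conductances q D lam \<kappa>'"
  have lift: "grad ends f1 e' = grad ?ends' f2 e'" if "f1 = (\<lambda>v. f2 (contr_class V F ends v))" for f1 f2 e'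
    using that by (simp add: grad_def contr_ends_def)
  have energy_le: "energy E ends ?c (\<lambda>v. f2 (contr_class V F ends v)) \<le> energy (contr_E E F) ?ends' ?c' f2" for f2
  proof -
    have "energy E ends ?c (\<lambda>v. f2 (contr_class V F ends v)) =
        energy (E - F) ends ?c (\<lambda>v. f2 (contr_class V F ends v))"
      unfolding energy_def using F G
      by (intro sum.mono_neutral_right) (auto simp: grad_def contr_class_edge connected_mg_def multigraph_def)
    also have "\<dots> \<le> energy (contr_E E F) ?ends' ?c' f2"
      unfolding energy_def contr_E_def lift[OF refl] using q \<open>\<kappa> \<le> \<kappa>'\<close>
      by (intro sum_mono mult_right_mono conductances_mono) auto
    finally show ?thesis .
  qed
  then have match: "\<exists>f1. grad ends f1 e = grad ?ends' f2 e \<and> energy E ends ?c f1 \<le> energy (contr_E E F) ?ends' ?c' f2" for f2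
    using lift[OF refl] by blast
  show "eff_res (contr_E E F) ?ends' ?c' e \<le> eff_res E ends ?c e"
    by (rule eff_res_mono[OF G _ _ match]) (use e D q in \<open>auto simp: cond_pos\<close>)
qed

theorem corollary4p9:
  fixes V V' :: "'v set" and E E' F :: "'e set" and ends :: "'e \<Rightarrow> 'v \<times> 'v"
    and p q :: real and lam1 lam2 :: "'e \<Rightarrow> bool"
  assumes G: "connected_mg V E ends" "simple_graph V E ends"
    and G': "subgraph V' E' V E ends" "connected_mg V' E' ends"
    and F: "F \<subseteq> E"
    and q: "q \<ge> 1" and p: "0 < p" "p < 1"
    and le: "\<forall>e\<in>E. lam1 e \<longrightarrow> lam2 e"
  shows "dominated E' (Pfree p q V' E' ends) (Pbc p q V E ends E' lam1)
       \<and> dominated E' (Pbc p q V E ends E' lam1) (Pbc p q V E ends E' lam2)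
       \<and> dominated (E - F) (Pbc p q V E ends (E - F) lam2)
            (Pfree p q (contr_V V F ends) (contr_E E F) (contr_ends V F ends))
       \<and> (\<forall>lam E''. E'' \<subseteq> E' \<longrightarrow>
            dominated E'' (Pbc p q V' E' ends E'' lam) (Pbc p q V E ends E'' lam))
       \<and> (\<forall>lam E''. E'' \<subseteq> E \<and> E'' \<inter> F = {} \<longrightarrow>
            dominated E'' (Pbc p q V E ends E'' lam)
              (Pbc p q (contr_V V F ends) (contr_E E F) (contr_ends V F ends) E'' lam))"
proof -
  have E': "E' \<subseteq> E"
    using G'(1) by (simp add: subgraph_def)
  have sub: "dominated E'' (Pbc p q V' E' ends E'' lam) (Pbc p q V E ends E'' lam)" if "E'' \<subseteq> E'" for lam E''
    using Pbc_dominated_subgraph[OF G'(2) G(1) E' that q p] by blast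
  have contr: "dominated E'' (Pbc p q V E ends E'' lam)
      (Pbc p q (contr_V V F ends) (contr_E E F) (contr_ends V F ends) E'' lam)"
    if "E'' \<subseteq> E" "E'' \<inter> F = {}" for lam E''
    by (rule Pbc_dominated_contraction[OF G(1) F that q p])
  have "Pfree p q V' E' ends = Pbc p q V' E' ends E' lam1"
    by (rule Pfree_eq_Pbc)
  moreover have "Pfree p q (contr_V V F ends) (contr_E E F) (contr_ends V F ends) =
      Pbc p q (contr_V V F ends) (contr_E E F) (contr_ends V F ends) (E - F) lam2"
    by (simp add: Pfree_eq_Pbc[where bc = lam2] contr_E_def)
  moreover have "dominated E' (Pbc p q V E ends E' lam1) (Pbc p q V E ends E' lam2)"
    by (rule Pbc_dominated_subgraph[OF G(1) G(1) order.refl E' q p le])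
  moreover have "dominated (E - F) (Pbc p q V E ends (E - F) lam2)
      (Pbc p q (contr_V V F ends) (contr_E E F) (contr_ends V F ends) (E - F) lam2)"
    by (rule contr) auto
  ultimately show ?thesis
    using sub contr by auto
qed

end
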